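(* Let $q \in \mathbb{N}$. Suppose $\psi(\cdot,t)\in \mathcal{F}$ and set $\bar{\psi}(\cdot,t) := \Upsilon (\psi(\cdot,t))$ for all $t \in \mathbb{R}_+$. The following are equivalent. (i) $\psi(\cdot,t) \in \mathcal{D}^q$ for all $t \ge 0$, and $\psi \in C^q(\mathbb{R}_+^2,\mathbb{R}_+)^{I}$. (ii) $\bar{\psi}(\cdot,t) \in \bar{\mathcal{D}}^q$ for all $t \ge 0$, and $\bar{\psi} \in C^q(\mathbb{R}_+^2,\mathbb{R}_+)^{I}$.
   Context: Fix $I\in\mathbb{N}$. $\mathcal{C}=\{f\in C(\mathbb{R}_+,\mathbb{R}_+):f(0)=0,f\text{ non-decreasing}\}$, $\mathcal{C}^\uparrow=\{f\in\mathcal{C}:f\text{ strictly increasing},\lim_{u\to\infty}f(u)=\infty\}$. $\mathcal{C}^q=\{f\in\mathcal{C}:f^{\mathbb{R}}\in C^q(\mathbb{R},\mathbb{R})\}$ where $f^{\mathbb{R}}$ is the extension of $f$ by $0$ to $(-\infty,0)$. For $\psi\in\mathcal{C}^I$, $\phi_i(u)=u-\sum_{j=1}^I2(i\wedge j)\psi_j(u)$. $\mathcal{F}=\{\psi\in\mathcal{C}^I:\phi_I\in\mathcal{C}^\uparrow\}$ (then every $\phi_i\in\mathcal{C}^\uparrow$), $\Upsilon(\psi)_i=\psi_i\circ\phi_i^{-1}$. $\mathcal{D}=\{\psi\in\mathcal{F}:\sum_ii\sup_{u_1\neq u_2}\frac{\psi_i(u_1)-\psi_i(u_2)}{\phi_i(u_1)-\phi_i(u_2)}<\frac12\}$,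 $\bar{\mathcal{D}}=\{\bar\psi\in\mathcal{C}^I:\sum_ii\sup_{z_1\neq z_2}\frac{\bar\psi_i(z_1)-\bar\psi_i(z_2)}{z_1-z_2}<\frac12\}$, $\mathcal{D}^q=\mathcal{D}\cap(\mathcal{C}^q)^I$, $\bar{\mathcal{D}}^q=\bar{\mathcal{D}}\cap(\mathcal{C}^q)^I$. *)

theory Defs
  imports "HOL-Analysis.Analysis"
begin

text \<open>Functions on R_+ are modelled as real => real; only values on {0..} matter.\<close>

definition zext :: "(real \<Rightarrow> real) \<Rightarrow> real \<Rightarrow> real" where
  "zext f x = (if x < 0 then 0 else f x)"

fun Ck :: "nat \<Rightarrow> (real \<Rightarrow> real) \<Rightarrow> bool" where
  "Ck 0 f = continuous_on UNIV f"
| "Ck (Suc q) f = ((\<forall>x. f differentiable (at x)) \<and> Ck q (deriv f))"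

fun Ck2 :: "nat \<Rightarrow> (real \<times> real) set \<Rightarrow> (real \<times> real \<Rightarrow> real) \<Rightarrow> bool" where
  "Ck2 0 S f = continuous_on S f"
| "Ck2 (Suc q) S f = (\<exists>g h. (\<forall>x\<in>S. (f has_derivative (\<lambda>v. fst v * g x + snd v * h x)) (at x within S))
                          \<and> Ck2 q S g \<and> Ck2 q S h)"

definition inC :: "(real \<Rightarrow> real) \<Rightarrow> bool" where
  "inC f \<longleftrightarrow> continuous_on {0..} f \<and> (\<forall>u\<ge>0. f u \<ge> 0) \<and> f 0 = 0 \<and> mono_on {0..} f"

definition inCup :: "(real \<Rightarrow> real) \<Rightarrow> bool" where
  "inCup f \<longleftrightarrow> inC f \<and> strict_mono_on {0..} f \<and> filterlim f at_top at_top"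

definition inCq :: "nat \<Rightarrow> (real \<Rightarrow> real) \<Rightarrow> bool" where
  "inCq q f \<longleftrightarrow> inC f \<and> Ck q (zext f)"

definition phi :: "nat \<Rightarrow> (nat \<Rightarrow> real \<Rightarrow> real) \<Rightarrow> nat \<Rightarrow> real \<Rightarrow> real" where
  "phi I \<psi> i u = u - (\<Sum>j=1..I. 2 * real (min i j) * \<psi> j u)"

definition inF :: "nat \<Rightarrow> (nat \<Rightarrow> real \<Rightarrow> real) \<Rightarrow> bool" where
  "inF I \<psi> \<longleftrightarrow> (\<forall>i\<in>{1..I}. inC (\<psi> i)) \<and> inCup (phi I \<psi> I)"

definition Upsilon :: "nat \<Rightarrow> (nat \<Rightarrow> real \<Rightarrow> real) \<Rightarrow> nat \<Rightarrow> real \<Rightarrow> real" where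
  "Upsilon I \<psi> i = \<psi> i \<circ> the_inv_into {0..} (phi I \<psi> i)"

definition inD :: "nat \<Rightarrow> (nat \<Rightarrow> real \<Rightarrow> real) \<Rightarrow> bool" where
  "inD I \<psi> \<longleftrightarrow> inF I \<psi> \<and>
     (\<Sum>i=1..I. ereal (real i) *
        (SUP p\<in>{(a,b). a \<ge> 0 \<and> b \<ge> 0 \<and> a \<noteq> (b::real)}.
           ereal ((\<psi> i (fst p) - \<psi> i (snd p)) / (phi I \<psi> i (fst p) - phi I \<psi> i (snd p))))) < 1/2"

definition inDbar :: "nat \<Rightarrow> (nat \<Rightarrow> real \<Rightarrow> real) \<Rightarrow> bool" where
  "inDbar I \<psi>b \<longleftrightarrow> (\<forall>i\<in>{1..I}. inC (\<psi>b i)) \<and>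
     (\<Sum>i=1..I. ereal (real i) *
        (SUP p\<in>{(a,b). a \<ge> 0 \<and> b \<ge> 0 \<and> a \<noteq> (b::real)}.
           ereal ((\<psi>b i (fst p) - \<psi>b i (snd p)) / (fst p - snd p)))) < 1/2"

definition inDq :: "nat \<Rightarrow> nat \<Rightarrow> (nat \<Rightarrow> real \<Rightarrow> real) \<Rightarrow> bool" where
  "inDq q I \<psi> \<longleftrightarrow> inD I \<psi> \<and> (\<forall>i\<in>{1..I}. inCq q (\<psi> i))"

definition inDbarq :: "nat \<Rightarrow> nat \<Rightarrow> (nat \<Rightarrow> real \<Rightarrow> real) \<Rightarrow> bool" where
  "inDbarq q I \<psi>b \<longleftrightarrow> inDbar I \<psi>b \<and> (\<forall>i\<in>{1..I}. inCq q (\<psi>b i))"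

definition inCq2 :: "nat \<Rightarrow> (real \<Rightarrow> real \<Rightarrow> real) \<Rightarrow> bool" where
  "inCq2 q f \<longleftrightarrow> Ck2 q ({0..} \<times> {0..}) (\<lambda>(u,t). f u t) \<and> (\<forall>u\<ge>0. \<forall>t\<ge>0. f u t \<ge> 0)"

end

theory Submission
  imports Defs
begin

(* Write phi_i(u) = u - 2 sum_j min(i,j) psi_j(u), so that Upsilon_i = psi_i o phi_i^-1.
   Each phi_i is an increasing bijection of [0,oo), so the difference quotients of Upsilon_i
   are exactly the quotients (psi_i(u1) - psi_i(u2)) / (phi_i(u1) - phi_i(u2)): the Lipschitz
   conditions defining D and D-bar coincide.

   From psi to Upsilon: if psi_j is L_j-Lipschitz with respect to phi_j, hence with respect
   to u, then every phi_i expands distances by at least 1 - 2 sum_j j L_j > 0.  By the inverse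
   function theorem phi_i^-1 is then C^q jointly in (z, t), and so is Upsilon_i.

   From Upsilon to psi: in the coordinate z = phi_I(u) the maps Phi_i = phi_i o phi_I^-1
   satisfy Phi_I(z) = z and Phi_i = Phi_(i+1) + 2 sum_(j>i) Upsilon_j o Phi_j, so they are C^q
   by downward induction on i, without any Lipschitz condition.  Since phi_I is 1-Lipschitz,
   Phi_0 = phi_I^-1 expands distances, so phi_I is C^q and psi_i = Upsilon_i o Phi_i o phi_I.

   Functions of one variable are treated as functions on the line R x {0}, after extending
   psi_j by zero, and hence phi_i by the identity, to negative arguments. *)

section \<open>Smooth functions on subsets of the plane\<close>

declare Ck2.simps(2)[simp del]

lemma Ck2_SucI:
  assumes "\<And>x. x \<in> S \<Longrightarrow> (f has_derivative (\<lambda>v. fst v * g x + snd v * h x)) (at x within S)"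
    and "Ck2 k S g" and "Ck2 k S h"
  shows "Ck2 (Suc k) S f"
  unfolding Ck2.simps(2) using assms by blast

lemma Ck2_SucE:
  assumes "Ck2 (Suc k) S f"
  obtains g h where "\<And>x. x \<in> S \<Longrightarrow> (f has_derivative (\<lambda>v. fst v * g x + snd v * h x)) (at x within S)"
    and "Ck2 k S g" and "Ck2 k S h"
  using assms unfolding Ck2.simps(2) by blast

lemma Ck2_imp_continuous_on: "Ck2 k S f \<Longrightarrow> continuous_on S f"
proof (cases k)
  case (Suc m)
  assume "Ck2 k S f"
  then obtain g h where "\<And>x. x \<in> S \<Longrightarrow> (f has_derivative (\<lambda>v. fst v * g x + snd v * h x)) (at x within S)"
    using Ck2_SucE Suc by metis
  then show ?thesis
    unfolding continuous_on_eq_continuous_within using has_derivative_continuous by blast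
qed simp

lemma Ck2_SucD: "Ck2 (Suc k) S f \<Longrightarrow> Ck2 k S f"
proof (induction k arbitrary: f)
  case 0
  then show ?case using Ck2_imp_continuous_on by simp
next
  case (Suc k)
  obtain g h
    where d: "\<And>x. x \<in> S \<Longrightarrow> (f has_derivative (\<lambda>v. fst v * g x + snd v * h x)) (at x within S)"
      and "Ck2 (Suc k) S g" "Ck2 (Suc k) S h"
    using Ck2_SucE[OF Suc.prems] by blast
  show ?case by (rule Ck2_SucI[OF d]) (use Suc.IH \<open>Ck2 (Suc k) S g\<close> \<open>Ck2 (Suc k) S h\<close> in blast)+
qed

lemma Ck2_le: "Ck2 m S f \<Longrightarrow> k \<le> m \<Longrightarrow> Ck2 k S f"
proof (induction m arbitrary: k)
  case (Suc m)
  show ?case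
  proof (cases "k = Suc m")
    case False
    then have "k \<le> m" using Suc.prems by linarith
    then show ?thesis using Suc.IH Ck2_SucD[OF Suc.prems(1)] by blast
  qed (use Suc.prems in blast)
qed simp

lemma Ck2_cong: "Ck2 k S f \<Longrightarrow> (\<And>x. x \<in> S \<Longrightarrow> f x = f' x) \<Longrightarrow> Ck2 k S f'"
proof (induction k arbitrary: f f')
  case 0
  then show ?case using continuous_on_cong[of S S f f'] by simp
next
  case (Suc k)
  obtain g h
    where d: "\<And>x. x \<in> S \<Longrightarrow> (f has_derivative (\<lambda>v. fst v * g x + snd v * h x)) (at x within S)"
      and gh: "Ck2 k S g" "Ck2 k S h"
    using Ck2_SucE[OF Suc.prems(1)] by blast
  have "(f' has_derivative (\<lambda>v. fst v * g x + snd v * h x)) (at x within S)" if "x \<in> S" for x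
    using d[OF that] Suc.prems(2) that by (meson has_derivative_transform_within zero_less_one)
  then show ?case by (rule Ck2_SucI[OF _ gh])
qed

lemma Ck2_const: "Ck2 k S (\<lambda>x. c)"
proof (induction k arbitrary: c)
  case (Suc k)
  show ?case by (rule Ck2_SucI[where g = "\<lambda>x. 0" and h = "\<lambda>x. 0"]) (simp_all add: Suc.IH)
qed simp

lemma Ck2_fst: "Ck2 k S fst"
proof (cases k)
  case (Suc m)
  show ?thesis unfolding Suc
    by (rule Ck2_SucI[where g = "\<lambda>x. 1" and h = "\<lambda>x. 0"])
       (simp_all add: Ck2_const has_derivative_fst[OF has_derivative_ident])
qed (simp add: continuous_on_fst)

lemma Ck2_snd: "Ck2 k S snd"
proof (cases k)
  case (Suc m)
  show ?thesis unfolding Suc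
    by (rule Ck2_SucI[where g = "\<lambda>x. 0" and h = "\<lambda>x. 1"])
       (simp_all add: Ck2_const has_derivative_snd[OF has_derivative_ident])
qed (simp add: continuous_on_snd)

lemma Ck2_add: "Ck2 k S f \<Longrightarrow> Ck2 k S g \<Longrightarrow> Ck2 k S (\<lambda>x. f x + g x)"
proof (induction k arbitrary: f g)
  case 0
  then show ?case by (simp add: continuous_on_add)
next
  case (Suc k)
  obtain f1 f2 where f: "\<And>x. x \<in> S \<Longrightarrow> (f has_derivative (\<lambda>v. fst v * f1 x + snd v * f2 x)) (at x within S)"
    and f12: "Ck2 k S f1" "Ck2 k S f2" using Ck2_SucE[OF Suc.prems(1)] by blast
  obtain g1 g2 where g: "\<And>x. x \<in> S \<Longrightarrow> (g has_derivative (\<lambda>v. fst v * g1 x + snd v * g2 x)) (at x within S)"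
    and g12: "Ck2 k S g1" "Ck2 k S g2" using Ck2_SucE[OF Suc.prems(2)] by blast
  show ?case
  proof (rule Ck2_SucI[where g = "\<lambda>x. f1 x + g1 x" and h = "\<lambda>x. f2 x + g2 x"])
    fix x assume "x \<in> S"
    with f g have "((\<lambda>x. f x + g x) has_derivative
        (\<lambda>v. (fst v * f1 x + snd v * f2 x) + (fst v * g1 x + snd v * g2 x))) (at x within S)"
      by (intro has_derivative_add)
    then show "((\<lambda>x. f x + g x) has_derivative
        (\<lambda>v. fst v * (f1 x + g1 x) + snd v * (f2 x + g2 x))) (at x within S)"
      by (simp add: algebra_simps)
  qed (use Suc.IH f12 g12 in blast)+
qed

lemma Ck2_mult: "Ck2 k S f \<Longrightarrow> Ck2 k S g \<Longrightarrow> Ck2 k S (\<lambda>x. f x * g x)"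
proof (induction k arbitrary: f g)
  case 0
  then show ?case by (simp add: continuous_on_mult)
next
  case (Suc k)
  obtain f1 f2 where f: "\<And>x. x \<in> S \<Longrightarrow> (f has_derivative (\<lambda>v. fst v * f1 x + snd v * f2 x)) (at x within S)"
    and f12: "Ck2 k S f1" "Ck2 k S f2" using Ck2_SucE[OF Suc.prems(1)] by blast
  obtain g1 g2 where g: "\<And>x. x \<in> S \<Longrightarrow> (g has_derivative (\<lambda>v. fst v * g1 x + snd v * g2 x)) (at x within S)"
    and g12: "Ck2 k S g1" "Ck2 k S g2" using Ck2_SucE[OF Suc.prems(2)] by blast
  have fg: "Ck2 k S f" "Ck2 k S g" using Suc.prems by (blast dest: Ck2_SucD)+
  show ?case
  proof (rule Ck2_SucI[where g = "\<lambda>x. f x * g1 x + f1 x * g x" and h = "\<lambda>x. f x * g2 x + f2 x * g x"])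
    fix x assume "x \<in> S"
    with f g have "((\<lambda>x. f x * g x) has_derivative
        (\<lambda>v. f x * (fst v * g1 x + snd v * g2 x) + (fst v * f1 x + snd v * f2 x) * g x)) (at x within S)"
      by (intro has_derivative_mult)
    then show "((\<lambda>x. f x * g x) has_derivative
        (\<lambda>v. fst v * (f x * g1 x + f1 x * g x) + snd v * (f x * g2 x + f2 x * g x))) (at x within S)"
      by (simp add: algebra_simps)
  qed (use Suc.IH Ck2_add fg f12 g12 in blast)+
qed

lemma Ck2_cmult: "Ck2 k S f \<Longrightarrow> Ck2 k S (\<lambda>x. c * f x)"
  using Ck2_mult[OF Ck2_const] by blast

lemma Ck2_diff: "Ck2 k S f \<Longrightarrow> Ck2 k S g \<Longrightarrow> Ck2 k S (\<lambda>x. f x - g x)"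
  using Ck2_add[of k S f "\<lambda>x. (-1) * g x"] Ck2_cmult[of k S g "-1"] by simp

lemma Ck2_sum: "finite J \<Longrightarrow> (\<And>j. j \<in> J \<Longrightarrow> Ck2 k S (f j)) \<Longrightarrow> Ck2 k S (\<lambda>x. \<Sum>j\<in>J. f j x)"
  by (induction J rule: finite_induct) (simp_all add: Ck2_const Ck2_add)

lemma Ck2_inverse: "Ck2 k S f \<Longrightarrow> (\<And>x. x \<in> S \<Longrightarrow> f x > 0) \<Longrightarrow> Ck2 k S (\<lambda>x. 1 / f x)"
proof (induction k arbitrary: f)
  case 0
  then have "\<And>x. x \<in> S \<Longrightarrow> f x \<noteq> 0" by force
  with 0 show ?case by (simp add: continuous_on_divide)
next
  case (Suc k)
  obtain f1 f2 where f: "\<And>x. x \<in> S \<Longrightarrow> (f has_derivative (\<lambda>v. fst v * f1 x + snd v * f2 x)) (at x within S)"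
    and f12: "Ck2 k S f1" "Ck2 k S f2" using Ck2_SucE[OF Suc.prems(1)] by blast
  have inv: "Ck2 k S (\<lambda>x. 1 / f x)" using Suc.IH[OF Ck2_SucD[OF Suc.prems(1)] Suc.prems(2)] .
  show ?case
  proof (rule Ck2_SucI[where g = "\<lambda>x. (-1) * (f1 x * (1 / f x * (1 / f x)))"
                         and h = "\<lambda>x. (-1) * (f2 x * (1 / f x * (1 / f x)))"])
    fix x assume x: "x \<in> S"
    then have "f x \<noteq> 0" using Suc.prems(2)[OF x] by simp
    have "((\<lambda>x. inverse (f x)) has_derivative
        (\<lambda>v. - (inverse (f x) * (fst v * f1 x + snd v * f2 x) * inverse (f x)))) (at x within S)"
      by (rule Deriv.has_derivative_inverse[OF \<open>f x \<noteq> 0\<close> f[OF x]])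
    then show "((\<lambda>x. 1 / f x) has_derivative (\<lambda>v. fst v * ((-1) * (f1 x * (1 / f x * (1 / f x))))
        + snd v * ((-1) * (f2 x * (1 / f x * (1 / f x)))))) (at x within S)"
      by (simp add: divide_inverse fun_eq_iff algebra_simps)
  qed (rule Ck2_cmult Ck2_mult f12 inv)+
qed

lemma Ck2_compose:
  assumes "Ck2 k S f" and "Ck2 k T a" and "Ck2 k T b" and "\<And>x. x \<in> T \<Longrightarrow> (a x, b x) \<in> S"
  shows "Ck2 k T (\<lambda>x. f (a x, b x))"
  using assms
proof (induction k arbitrary: f a b)
  case 0
  then show ?case
    by (auto intro!: continuous_on_compose2[of S f] continuous_on_Pair)
next
  case (Suc k)
  obtain f1 f2 where f: "\<And>x. x \<in> S \<Longrightarrow> (f has_derivative (\<lambda>v. fst v * f1 x + snd v * f2 x)) (at x within S)"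
    and f12: "Ck2 k S f1" "Ck2 k S f2" using Ck2_SucE[OF Suc.prems(1)] by blast
  obtain a1 a2 where a: "\<And>x. x \<in> T \<Longrightarrow> (a has_derivative (\<lambda>v. fst v * a1 x + snd v * a2 x)) (at x within T)"
    and a12: "Ck2 k T a1" "Ck2 k T a2" using Ck2_SucE[OF Suc.prems(2)] by blast
  obtain b1 b2 where b: "\<And>x. x \<in> T \<Longrightarrow> (b has_derivative (\<lambda>v. fst v * b1 x + snd v * b2 x)) (at x within T)"
    and b12: "Ck2 k T b1" "Ck2 k T b2" using Ck2_SucE[OF Suc.prems(3)] by blast
  have "Ck2 k T a" "Ck2 k T b" using Suc.prems(2,3) by (blast dest: Ck2_SucD)+
  then have F: "Ck2 k T (\<lambda>x. f1 (a x, b x))" "Ck2 k T (\<lambda>x. f2 (a x, b x))"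
    using Suc.IH f12 Suc.prems(4) by blast+
  show ?case
  proof (rule Ck2_SucI[where g = "\<lambda>x. a1 x * f1 (a x, b x) + b1 x * f2 (a x, b x)"
                         and h = "\<lambda>x. a2 x * f1 (a x, b x) + b2 x * f2 (a x, b x)"])
    fix x assume x: "x \<in> T"
    have "((\<lambda>x. (a x, b x)) has_derivative
        (\<lambda>v. (fst v * a1 x + snd v * a2 x, fst v * b1 x + snd v * b2 x))) (at x within T)"
      using a b x by (intro has_derivative_Pair)
    from has_derivative_in_compose2[OF f image_subsetI[OF Suc.prems(4)] x this]
    show "((\<lambda>x. f (a x, b x)) has_derivative (\<lambda>v. fst v * (a1 x * f1 (a x, b x) + b1 x * f2 (a x, b x))
        + snd v * (a2 x * f1 (a x, b x) + b2 x * f2 (a x, b x)))) (at x within T)"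
      by (force simp: algebra_simps)
  qed (use Ck2_mult Ck2_add F a12 b12 in blast)+
qed

lemma Ck_imp_Ck2_fst: "Ck k f \<Longrightarrow> Ck2 k S (\<lambda>p. f (fst p))"
proof (induction k arbitrary: f)
  case 0
  then show ?case
    using continuous_on_compose2[of UNIV f S fst] continuous_on_fst[OF continuous_on_id] by auto
next
  case (Suc k)
  then have d: "\<And>y. (f has_real_derivative deriv f y) (at y)" and dk: "Ck k (deriv f)"
    by (auto simp: DERIV_deriv_iff_real_differentiable)
  show ?case
  proof (rule Ck2_SucI[where g = "\<lambda>p. deriv f (fst p)" and h = "\<lambda>p. 0"])
    fix x :: "real \<times> real"
    show "((\<lambda>p. f (fst p)) has_derivative (\<lambda>v. fst v * deriv f (fst x) + snd v * 0)) (at x within S)"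
      using has_derivative_compose[OF has_derivative_fst[OF has_derivative_ident[of "at x within S"]]
          d[of "fst x", unfolded has_field_derivative_def]]
      by (simp add: mult.commute)
  qed (use Suc.IH dk Ck2_const in blast)+
qed

lemma Ck2_imp_Ck_line: "Ck2 k (UNIV \<times> {0}) F \<Longrightarrow> Ck k (\<lambda>x. F (x, 0))"
proof (induction k arbitrary: F)
  case 0
  then show ?case
    by (auto intro!: continuous_on_compose2[of "UNIV \<times> {0}" F] continuous_on_Pair)
next
  case (Suc k)
  obtain g h where F: "\<And>x. x \<in> UNIV \<times> {0} \<Longrightarrow>
      (F has_derivative (\<lambda>v. fst v * g x + snd v * h x)) (at x within UNIV \<times> {0})"
    and "Ck2 k (UNIV \<times> {0}) g" using Ck2_SucE[OF Suc.prems] by blast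
  have D: "((\<lambda>x. F (x, 0)) has_real_derivative g (y, 0)) (at y)" for y
  proof -
    have "((\<lambda>x. (x, 0)) has_derivative (\<lambda>v. (v, 0))) (at y)"
      by (auto intro!: derivative_eq_intros)
    from has_derivative_in_compose2[OF F _ _ this] show ?thesis
      by (auto simp: has_field_derivative_def mult_commute_abs)
  qed
  then have "deriv (\<lambda>x. F (x, 0)) = (\<lambda>y. g (y, 0))"
    by (simp add: DERIV_imp_deriv fun_eq_iff)
  with D Suc.IH \<open>Ck2 k (UNIV \<times> {0}) g\<close> show ?case
    by (auto simp: real_differentiable_def)
qed

lemma Ck2_divide:
  "Ck2 k S f \<Longrightarrow> Ck2 k S g \<Longrightarrow> (\<And>x. x \<in> S \<Longrightarrow> g x > 0) \<Longrightarrow> Ck2 k S (\<lambda>x. f x / g x)"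
  using Ck2_mult[of k S f "\<lambda>x. 1 / g x"] Ck2_inverse[of k S g] by simp

lemma Ck2_minus: "Ck2 k S f \<Longrightarrow> Ck2 k S (\<lambda>x. - f x)"
  using Ck2_cmult[of k S f "-1"] by simp

lemma Ck_imp_continuous_on: "Ck k f \<Longrightarrow> continuous_on UNIV f"
proof (cases k)
  case (Suc m)
  assume "Ck k f"
  then have "\<forall>x. f differentiable (at x)" using Suc by simp
  then show ?thesis
    by (simp add: continuous_at_imp_continuous_on differentiable_imp_continuous_within)
qed simp

lemma continuous_on_of_zext: "continuous_on UNIV (zext f) \<Longrightarrow> continuous_on {0..} f"
  by (rule continuous_on_cong[THEN iffD1, OF refl _ continuous_on_subset[of UNIV]]) (auto simp: zext_def)

section \<open>Inverses of monotone families of functions\<close>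

lemma has_derivative_partial_fst_ge:
  fixes h :: "real \<times> real \<Rightarrow> real"
  assumes d: "(h has_derivative (\<lambda>v. fst v * a + snd v * b)) (at (u, t) within S)"
    and segment: "\<And>s. 0 \<le> s \<Longrightarrow> s \<le> 1 \<Longrightarrow> (u + s, t) \<in> S"
    and growth: "\<And>s. 0 < s \<Longrightarrow> s < 1 \<Longrightarrow> c * s \<le> h (u + s, t) - h (u, t)"
  shows "c \<le> a"
proof -
  let ?r = "\<lambda>s::real. (u + s, t)"
  have "(?r has_derivative (\<lambda>s. (s, 0))) (at 0 within {0..1})"
    by (auto intro!: derivative_eq_intros)
  moreover have "(h has_derivative (\<lambda>v. fst v * a + snd v * b)) (at (?r 0) within ?r ` {0..1})"
    by (simp, rule has_derivative_subset[OF d]) (auto intro: segment)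
  ultimately have "((\<lambda>s. h (?r s)) has_derivative (\<lambda>s. s * a)) (at 0 within {0..1})"
    using has_derivative_in_compose by fastforce
  then have "((\<lambda>s. h (?r s)) has_field_derivative a) (at 0 within {0..1})"
    unfolding has_field_derivative_def by (rule has_derivative_eq_rhs) (simp add: fun_eq_iff mult.commute)
  then have "((\<lambda>s. (h (?r s) - h (?r 0)) / (s - 0)) \<longlongrightarrow> a) (at_right 0)"
    unfolding has_field_derivative_iff by (simp add: at_within_Icc_at_right)
  moreover have "\<forall>\<^sub>F s in at_right 0. c \<le> (h (?r s) - h (?r 0)) / (s - 0)"
    unfolding eventually_at_right_field
    by (rule exI[of _ 1]) (auto simp: pos_le_divide_eq growth)
  ultimately show ?thesis
    by (rule tendsto_lowerbound) simp
qed

locale param_bijection =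
  fixes A B :: "real set" and h :: "real \<times> real \<Rightarrow> real"
  assumes upward_closed: "\<And>u v. u \<in> A \<Longrightarrow> u \<le> v \<Longrightarrow> v \<in> A"
    and strict_mono_slice: "\<And>t. t \<in> B \<Longrightarrow> strict_mono_on A (\<lambda>u. h (u, t))"
    and onto_slice: "\<And>t. t \<in> B \<Longrightarrow> (\<lambda>u. h (u, t)) ` A = A"
begin

definition param_inv :: "real \<times> real \<Rightarrow> real" where
  "param_inv p = the_inv_into A (\<lambda>u. h (u, snd p)) (fst p)"

lemma slice_le_iff: "t \<in> B \<Longrightarrow> u1 \<in> A \<Longrightarrow> u2 \<in> A \<Longrightarrow> h (u1, t) \<le> h (u2, t) \<longleftrightarrow> u1 \<le> u2"
  using strict_mono_on_less_eq[OF strict_mono_slice] by blast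

lemma inj_on_slice: "t \<in> B \<Longrightarrow> inj_on (\<lambda>u. h (u, t)) A"
  using strict_mono_on_imp_inj_on[OF strict_mono_slice] .

lemma param_inv_mem: "p \<in> A \<times> B \<Longrightarrow> param_inv p \<in> A"
  unfolding param_inv_def using the_inv_into_into[OF inj_on_slice] onto_slice by (auto simp: mem_Times_iff)

lemma h_param_inv: "p \<in> A \<times> B \<Longrightarrow> h (param_inv p, snd p) = fst p"
  unfolding param_inv_def
  using f_the_inv_into_f[OF inj_on_slice, of "snd p" "fst p"] onto_slice by (auto simp: mem_Times_iff)

lemma param_inv_h: "u \<in> A \<Longrightarrow> t \<in> B \<Longrightarrow> param_inv (h (u, t), t) = u"
  unfolding param_inv_def using the_inv_into_f_f[OF inj_on_slice] by simp

lemma param_inv_snd_mem: "p \<in> A \<times> B \<Longrightarrow> (param_inv p, snd p) \<in> A \<times> B"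
  using param_inv_mem by (auto simp: mem_Times_iff)

lemma image_h_snd: "(\<lambda>y. (h y, snd y)) ` (A \<times> B) = A \<times> B"
proof
  show "(\<lambda>y. (h y, snd y)) ` (A \<times> B) \<subseteq> A \<times> B"
    using onto_slice by fastforce
  show "A \<times> B \<subseteq> (\<lambda>y. (h y, snd y)) ` (A \<times> B)"
  proof
    fix z assume z: "z \<in> A \<times> B"
    with h_param_inv[OF z] show "z \<in> (\<lambda>y. (h y, snd y)) ` (A \<times> B)"
      by (intro image_eqI[OF _ param_inv_snd_mem[OF z]]) simp
  qed
qed

lemma eventually_param_inv_less:
  assumes h: "continuous_on (A \<times> B) h" and p: "p \<in> A \<times> B" and c: "c \<in> A" "param_inv p < c"
  shows "\<forall>\<^sub>F y in at p within A \<times> B. param_inv y < c"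
proof -
  have "continuous_on (A \<times> B) (\<lambda>y. h (c, snd y) - fst y)"
    using c by (intro continuous_intros continuous_on_compose2[OF h]) auto
  moreover have "fst p < h (c, snd p)"
    using c h_param_inv[OF p] slice_le_iff[of "snd p" c "param_inv p"] param_inv_mem[OF p] p
    by (auto simp: mem_Times_iff)
  ultimately have "\<forall>\<^sub>F y in at p within A \<times> B. 0 < h (c, snd y) - fst y"
    using p by (intro order_tendstoD(1)[of _ "h (c, snd p) - fst p"]) (auto simp: continuous_on_def)
  moreover have "\<forall>\<^sub>F y in at p within A \<times> B. y \<in> A \<times> B"
    by (simp add: eventually_at_filter)
  ultimately show ?thesis
  proof eventually_elim
    case (elim y)
    then show ?case
      using c h_param_inv[of y] slice_le_iff[of "snd y" c "param_inv y"] param_inv_mem[of y]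
      by (auto simp: mem_Times_iff)
  qed
qed

lemma eventually_param_inv_greater:
  assumes h: "continuous_on (A \<times> B) h" and p: "p \<in> A \<times> B" and c: "c \<in> A" "c < param_inv p"
  shows "\<forall>\<^sub>F y in at p within A \<times> B. c < param_inv y"
proof -
  have "continuous_on (A \<times> B) (\<lambda>y. fst y - h (c, snd y))"
    using c by (intro continuous_intros continuous_on_compose2[OF h]) auto
  moreover have "h (c, snd p) < fst p"
    using c h_param_inv[OF p] slice_le_iff[of "snd p" "param_inv p" c] param_inv_mem[OF p] p
    by (auto simp: mem_Times_iff)
  ultimately have "\<forall>\<^sub>F y in at p within A \<times> B. 0 < fst y - h (c, snd y)"
    using p by (intro order_tendstoD(1)[of _ "fst p - h (c, snd p)"]) (auto simp: continuous_on_def)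
  moreover have "\<forall>\<^sub>F y in at p within A \<times> B. y \<in> A \<times> B"
    by (simp add: eventually_at_filter)
  ultimately show ?thesis
  proof eventually_elim
    case (elim y)
    then show ?case
      using c h_param_inv[of y] slice_le_iff[of "snd y" "param_inv y" c] param_inv_mem[of y]
      by (auto simp: mem_Times_iff)
  qed
qed

lemma continuous_on_param_inv:
  assumes h: "continuous_on (A \<times> B) h"
  shows "continuous_on (A \<times> B) param_inv"
  unfolding continuous_on_def
proof (intro ballI order_tendstoI)
  fix p c assume p: "p \<in> A \<times> B"
  show "\<forall>\<^sub>F y in at p within A \<times> B. param_inv y < c" if "param_inv p < c"
    using eventually_param_inv_less[OF h p _ that] upward_closed[OF param_inv_mem[OF p]] that by simp
  show "\<forall>\<^sub>F y in at p within A \<times> B. c < param_inv y" if "c < param_inv p"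
  proof (cases "c \<in> A")
    case True
    then show ?thesis using eventually_param_inv_greater[OF h p _ that] by simp
  next
    case False
    then have above: "c < u" if "u \<in> A" for u
      using upward_closed[OF that, of c] by force
    have "\<forall>\<^sub>F y in at p within A \<times> B. y \<in> A \<times> B"
      by (simp add: eventually_at_filter)
    then show ?thesis
      by (rule eventually_mono) (blast intro: above param_inv_mem)
  qed
qed

end

locale param_expanding =
  fixes A B :: "real set" and h :: "real \<times> real \<Rightarrow> real"
  assumes upward_closed: "\<And>u v. u \<in> A \<Longrightarrow> u \<le> v \<Longrightarrow> v \<in> A"
    and onto_slice: "\<And>t. t \<in> B \<Longrightarrow> (\<lambda>u. h (u, t)) ` A = A"
    and expanding: "\<And>t. t \<in> B \<Longrightarrow>
      \<exists>c>0. \<forall>u1\<in>A. \<forall>u2\<in>A. u1 \<le> u2 \<longrightarrow> c * (u2 - u1) \<le> h (u2, t) - h (u1, t)"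
begin

sublocale param_bijection A B h
proof
  show "strict_mono_on A (\<lambda>u. h (u, t))" if t: "t \<in> B" for t
  proof (rule strict_mono_onI)
    fix r s assume "r \<in> A" "s \<in> A" "r < s"
    moreover obtain c where "c > 0"
      and "\<forall>u1\<in>A. \<forall>u2\<in>A. u1 \<le> u2 \<longrightarrow> c * (u2 - u1) \<le> h (u2, t) - h (u1, t)"
      using expanding[OF t] by blast
    ultimately have "0 < c * (s - r)" "c * (s - r) \<le> h (s, t) - h (r, t)" by auto
    then show "h (r, t) < h (s, t)" by linarith
  qed
qed (fact upward_closed onto_slice)+

lemma partial_fst_pos:
  assumes p: "p \<in> A \<times> B" and d: "(h has_derivative (\<lambda>v. fst v * a + snd v * b)) (at p within A \<times> B)"
  shows "0 < a"
proof -
  obtain u t where ut: "p = (u, t)" "u \<in> A" "t \<in> B" using p by auto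
  obtain c where "c > 0" and c: "\<forall>u1\<in>A. \<forall>u2\<in>A. u1 \<le> u2 \<longrightarrow> c * (u2 - u1) \<le> h (u2, t) - h (u1, t)"
    using expanding[OF ut(3)] by blast
  have "c \<le> a"
  proof (rule has_derivative_partial_fst_ge[OF d[unfolded ut]])
    have us: "u + s \<in> A" if "0 \<le> s" for s
      using upward_closed[OF ut(2)] that by simp
    then show "(u + s, t) \<in> A \<times> B" if "0 \<le> s" for s
      using that ut(3) by simp
    show "c * s \<le> h (u + s, t) - h (u, t)" if "0 < s" for s
      using bspec[OF bspec[OF c ut(2)] us[of s]] that by simp
  qed
  with \<open>c > 0\<close> show ?thesis by simp
qed

lemma param_inv_has_derivative:
  assumes h: "continuous_on (A \<times> B) h" and p: "p \<in> A \<times> B"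
    and d: "(h has_derivative (\<lambda>v. fst v * a + snd v * b)) (at (param_inv p, snd p) within A \<times> B)"
  shows "(param_inv has_derivative (\<lambda>w. fst w * (1 / a) + snd w * (- b / a))) (at p within A \<times> B)"
proof -
  define x where "x = (param_inv p, snd p)"
  define F where "F y = (h y, snd y)" for y :: "real \<times> real"
  define G' where "G' w = ((fst w - b * snd w) / a, snd w)" for w :: "real \<times> real"
  have x: "x \<in> A \<times> B" using param_inv_snd_mem[OF p] by (simp add: x_def)
  then have "a \<noteq> 0" using partial_fst_pos[OF x d[folded x_def]] by simp
  have dF: "(F has_derivative (\<lambda>v. (fst v * a + snd v * b, snd v))) (at x within A \<times> B)"
    unfolding F_def x_def
    by (intro has_derivative_Pair d bounded_linear_imp_has_derivative[OF bounded_linear_snd])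
  have F_image: "F ` (A \<times> B) = A \<times> B"
    using image_h_snd by (simp add: F_def[abs_def])
  have Fx: "F x = p" using h_param_inv[OF p] by (simp add: F_def x_def)
  have "continuous_on (A \<times> B) (\<lambda>z. (param_inv z, snd z))"
    by (intro continuous_on_Pair continuous_on_param_inv[OF h] continuous_on_snd continuous_on_id)
  then have "continuous (at p within A \<times> B) (\<lambda>z. (param_inv z, snd z))"
    using p unfolding continuous_on_eq_continuous_within by blast
  then have cont: "continuous (at (F x) within F ` (A \<times> B)) (\<lambda>z. (param_inv z, snd z))"
    unfolding Fx F_image .
  have lin: "linear G'"
    by (rule linearI) (auto simp: G'_def algebra_simps add_divide_distrib diff_divide_distrib)
  have inverse: "G' \<circ> (\<lambda>v. (fst v * a + snd v * b, snd v)) = id"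
    using \<open>a \<noteq> 0\<close> by (auto simp: G'_def fun_eq_iff)
  have left_inverse: "(\<lambda>z. (param_inv z, snd z)) (F y) = y" if "y \<in> A \<times> B" for y
    using that by (cases y) (simp add: F_def param_inv_h)
  have "((\<lambda>z. (param_inv z, snd z)) has_derivative G') (at (F x) within F ` (A \<times> B))"
    by (rule has_derivative_inverse_within[OF dF cont x lin inverse left_inverse])
  then have "((\<lambda>z. fst (param_inv z, snd z)) has_derivative (\<lambda>w. fst (G' w))) (at p within A \<times> B)"
    unfolding Fx F_image by (rule has_derivative_fst)
  then have "(param_inv has_derivative (\<lambda>w. fst (G' w))) (at p within A \<times> B)"
    by simp
  then show ?thesis
    by (rule has_derivative_eq_rhs) (use \<open>a \<noteq> 0\<close> in \<open>auto simp: G'_def fun_eq_iff field_simps\<close>)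
qed

lemma Ck2_param_inv:
  assumes h: "Ck2 (Suc q) (A \<times> B) h"
  shows "Ck2 (Suc q) (A \<times> B) param_inv"
proof -
  obtain ha hb where d: "\<And>x. x \<in> A \<times> B \<Longrightarrow>
      (h has_derivative (\<lambda>v. fst v * ha x + snd v * hb x)) (at x within A \<times> B)"
    and ab: "Ck2 q (A \<times> B) ha" "Ck2 q (A \<times> B) hb"
    using Ck2_SucE[OF h] by blast
  have cont: "continuous_on (A \<times> B) h" using Ck2_imp_continuous_on[OF h] .
  have pos: "0 < ha (param_inv p, snd p)" if "p \<in> A \<times> B" for p
    using partial_fst_pos[OF param_inv_snd_mem[OF that] d[OF param_inv_snd_mem[OF that]]] .
  have "Ck2 k (A \<times> B) param_inv" if "k \<le> Suc q" for k
    using that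
  proof (induction k)
    case 0
    then show ?case using continuous_on_param_inv[OF cont] by simp
  next
    case (Suc k)
    then have "k \<le> q" "Ck2 k (A \<times> B) param_inv" by simp_all
    then have ha': "Ck2 k (A \<times> B) (\<lambda>p. ha (param_inv p, snd p))"
      and hb': "Ck2 k (A \<times> B) (\<lambda>p. hb (param_inv p, snd p))"
      using Ck2_compose[OF Ck2_le[OF ab(1)] _ Ck2_snd param_inv_snd_mem] Ck2_compose[OF Ck2_le[OF ab(2)] _ Ck2_snd param_inv_snd_mem]
      by blast+
    have "Ck2 k (A \<times> B) (\<lambda>p. 1 / ha (param_inv p, snd p))"
      by (rule Ck2_divide[OF Ck2_const ha' pos])
    moreover have "Ck2 k (A \<times> B) (\<lambda>p. - hb (param_inv p, snd p) / ha (param_inv p, snd p))"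
      by (rule Ck2_divide[OF Ck2_minus[OF hb'] ha' pos])
    ultimately show ?case
    proof (rule Ck2_SucI[rotated])
      fix p assume p: "p \<in> A \<times> B"
      show "(param_inv has_derivative (\<lambda>v. fst v * (1 / ha (param_inv p, snd p))
          + snd v * (- hb (param_inv p, snd p) / ha (param_inv p, snd p)))) (at p within A \<times> B)"
        by (rule param_inv_has_derivative[OF cont p d[OF param_inv_snd_mem[OF p]]])
    qed
  qed
  then show ?thesis by simp
qed

end

section \<open>Recovering a family from its transform\<close>

lemma (in param_bijection) param_expanding_param_inv:
  assumes contracting: "\<And>t u1 u2. t \<in> B \<Longrightarrow> u1 \<in> A \<Longrightarrow> u2 \<in> A \<Longrightarrow> u1 \<le> u2 \<Longrightarrow>
    h (u2, t) - h (u1, t) \<le> u2 - u1"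
  shows "param_expanding A B param_inv"
proof
  show "(\<lambda>u. param_inv (u, t)) ` A = A" if t: "t \<in> B" for t
  proof
    show "(\<lambda>u. param_inv (u, t)) ` A \<subseteq> A" using param_inv_mem t by auto
    show "A \<subseteq> (\<lambda>u. param_inv (u, t)) ` A"
    proof
      fix v assume v: "v \<in> A"
      then have "h (v, t) \<in> A" using onto_slice[OF t] by blast
      then show "v \<in> (\<lambda>u. param_inv (u, t)) ` A"
        by (rule image_eqI[rotated]) (simp add: param_inv_h[OF v t])
    qed
  qed
  show "\<exists>c>0. \<forall>u1\<in>A. \<forall>u2\<in>A. u1 \<le> u2 \<longrightarrow> c * (u2 - u1) \<le> param_inv (u2, t) - param_inv (u1, t)"
    if t: "t \<in> B" for t
  proof (intro exI[of _ 1] conjI ballI impI)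
    fix u1 u2 assume u: "u1 \<in> A" "u2 \<in> A" "u1 \<le> u2"
    then have p: "(u1, t) \<in> A \<times> B" "(u2, t) \<in> A \<times> B" using t by auto
    note eq = h_param_inv[OF p(1)] h_param_inv[OF p(2)]
    note mem = param_inv_mem[OF p(1)] param_inv_mem[OF p(2)]
    have "param_inv (u1, t) \<le> param_inv (u2, t)"
      using slice_le_iff[OF t mem] eq u(3) by simp
    then show "1 * (u2 - u1) \<le> param_inv (u2, t) - param_inv (u1, t)"
      using contracting[OF t mem] eq by simp
  qed simp
qed (fact upward_closed)

lemma Ck2_downward_recursion:
  fixes \<Phi> g :: "nat \<Rightarrow> real \<times> real \<Rightarrow> real"
  assumes last: "\<And>p. p \<in> S \<Longrightarrow> \<Phi> I p = fst p"
    and rec: "\<And>p i. p \<in> S \<Longrightarrow> i < I \<Longrightarrow> \<Phi> i p = \<Phi> (Suc i) p + 2 * (\<Sum>j=Suc i..I. g j (\<Phi> j p, snd p))"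
    and g: "\<And>j. j \<in> {1..I} \<Longrightarrow> Ck2 k T (g j)"
    and mem: "\<And>p j. p \<in> S \<Longrightarrow> j \<le> I \<Longrightarrow> (\<Phi> j p, snd p) \<in> T"
    and i: "i \<le> I"
  shows "Ck2 k S (\<Phi> i)"
proof -
  have "\<forall>j\<in>{i..I}. Ck2 k S (\<Phi> j)"
    using i
  proof (induction rule: inc_induct)
    case base
    have "Ck2 k S (\<Phi> I)" by (rule Ck2_cong[OF Ck2_fst]) (simp add: last)
    then show ?case by simp
  next
    case (step n)
    have "Ck2 k S (\<lambda>p. g j (\<Phi> j p, snd p))" if "j \<in> {Suc n..I}" for j
      using that step.IH by (intro Ck2_compose[OF g _ Ck2_snd mem]) auto
    then have "Ck2 k S (\<lambda>p. \<Phi> (Suc n) p + 2 * (\<Sum>j=Suc n..I. g j (\<Phi> j p, snd p)))"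
      using step.IH step.hyps by (intro Ck2_add Ck2_cmult Ck2_sum) auto
    then have "Ck2 k S (\<Phi> n)"
      by (rule Ck2_cong) (simp add: rec step.hyps)
    with step.IH show ?case
      by (metis atLeastAtMost_iff le_antisym not_less_eq_eq)
  qed
  then show ?thesis using i by simp
qed

lemma Ck2_recover:
  fixes \<phi> g :: "nat \<Rightarrow> real \<times> real \<Rightarrow> real"
  assumes upward_closed: "\<And>u v. u \<in> A \<Longrightarrow> u \<le> v \<Longrightarrow> v \<in> A"
    and g: "\<And>j. j \<in> {1..I} \<Longrightarrow> Ck2 (Suc q) (A \<times> B) (g j)"
    and rec: "\<And>p i. p \<in> A \<times> B \<Longrightarrow> i < I \<Longrightarrow>
      \<phi> i p = \<phi> (Suc i) p + 2 * (\<Sum>j=Suc i..I. g j (\<phi> j p, snd p))"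
    and start: "\<And>p. \<phi> 0 p = fst p"
    and mem: "\<And>p i. p \<in> A \<times> B \<Longrightarrow> i \<le> I \<Longrightarrow> \<phi> i p \<in> A"
    and onto: "\<And>t. t \<in> B \<Longrightarrow> (\<lambda>u. \<phi> I (u, t)) ` A = A"
    and strict_mono: "\<And>t. t \<in> B \<Longrightarrow> strict_mono_on A (\<lambda>u. \<phi> I (u, t))"
    and contracting: "\<And>t u1 u2. t \<in> B \<Longrightarrow> u1 \<in> A \<Longrightarrow> u2 \<in> A \<Longrightarrow> u1 \<le> u2 \<Longrightarrow>
      \<phi> I (u2, t) - \<phi> I (u1, t) \<le> u2 - u1"
    and i: "i \<le> I"
  shows "Ck2 (Suc q) (A \<times> B) (\<phi> i)"
proof -
  interpret phiI: param_bijection A B "\<phi> I"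
    using upward_closed strict_mono onto by unfold_locales
  let ?H = phiI.param_inv
  define \<Phi> where "\<Phi> j p = \<phi> j (?H p, snd p)" for j p
  have \<Phi>: "Ck2 (Suc q) (A \<times> B) (\<Phi> j)" if "j \<le> I" for j
  proof (rule Ck2_downward_recursion[OF _ _ g _ that])
    show "\<Phi> I p = fst p" if "p \<in> A \<times> B" for p
      using phiI.h_param_inv[OF that] by (simp add: \<Phi>_def)
    show "\<Phi> i p = \<Phi> (Suc i) p + 2 * (\<Sum>j=Suc i..I. g j (\<Phi> j p, snd p))"
      if "p \<in> A \<times> B" "i < I" for p i
      using rec[OF phiI.param_inv_snd_mem that(2)] that(1) by (simp add: \<Phi>_def)
    show "(\<Phi> j p, snd p) \<in> A \<times> B" if "p \<in> A \<times> B" "j \<le> I" for p j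
      using mem[OF phiI.param_inv_snd_mem that(2)] that(1) by (auto simp: \<Phi>_def mem_Times_iff)
  qed
  have H_\<phi>: "?H (\<phi> I p, snd p) = fst p" if "p \<in> A \<times> B" for p
    using that by (cases p) (simp add: phiI.param_inv_h)
  interpret H: param_expanding A B ?H
    by (rule phiI.param_expanding_param_inv[OF contracting])
  have "Ck2 (Suc q) (A \<times> B) H.param_inv"
  proof (rule H.Ck2_param_inv)
    have "\<Phi> 0 = ?H" by (simp add: fun_eq_iff \<Phi>_def start)
    then show "Ck2 (Suc q) (A \<times> B) ?H" using \<Phi>[of 0] by simp
  qed
  then have \<phi>I: "Ck2 (Suc q) (A \<times> B) (\<phi> I)"
  proof (rule Ck2_cong)
    fix p assume p: "p \<in> A \<times> B"
    have "\<phi> I p \<in> A" using mem[OF p order_refl] .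
    with H_\<phi>[OF p] show "H.param_inv p = \<phi> I p"
      using H.param_inv_h[of "\<phi> I p" "snd p"] p by (auto simp: mem_Times_iff)
  qed
  have "Ck2 (Suc q) (A \<times> B) (\<lambda>p. \<Phi> i (\<phi> I p, snd p))"
    using Ck2_compose[OF \<Phi>[OF i] \<phi>I Ck2_snd] mem by (auto simp: mem_Times_iff)
  then show ?thesis
    by (rule Ck2_cong) (simp add: \<Phi>_def H_\<phi>)
qed

section \<open>The maps phi and Upsilon\<close>

lemma inF_inC: "inF I \<psi> \<Longrightarrow> j \<in> {1..I} \<Longrightarrow> inC (\<psi> j)"
  unfolding inF_def by blast

lemma inC_mono: "inC f \<Longrightarrow> 0 \<le> u1 \<Longrightarrow> u1 \<le> u2 \<Longrightarrow> f u1 \<le> f u2"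
  unfolding inC_def mono_on_def by simp

lemma phi_diff:
  "phi I \<psi> i u2 - phi I \<psi> i u1 = (u2 - u1) - (\<Sum>j=1..I. 2 * real (min i j) * (\<psi> j u2 - \<psi> j u1))"
  by (simp add: phi_def sum_subtractf right_diff_distrib)

lemma phi_0: "phi I \<psi> 0 u = u"
  by (simp add: phi_def)

lemma phi_zero: "inF I \<psi> \<Longrightarrow> phi I \<psi> i 0 = 0"
  unfolding phi_def by (auto intro!: sum.neutral dest: inF_inC simp: inC_def)

lemma phi_Suc:
  assumes "i < I"
  shows "phi I \<psi> i u = phi I \<psi> (Suc i) u + 2 * (\<Sum>j=Suc i..I. \<psi> j u)"
proof -
  have "2 * real (min (Suc i) j) * \<psi> j u = 2 * real (min i j) * \<psi> j u + (if Suc i \<le> j then 2 * \<psi> j u else 0)"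
    for j by (auto simp: min_def algebra_simps)
  moreover have "{j \<in> {1..I}. Suc i \<le> j} = {Suc i..I}" by auto
  ultimately show ?thesis
    by (simp add: phi_def sum.distrib sum.inter_filter[symmetric] sum_distrib_left)
qed

lemma phi_increment_bounds:
  assumes F: "inF I \<psi>" and i: "i \<le> I" and u: "0 \<le> u1" "u1 \<le> u2"
  shows "phi I \<psi> I u2 - phi I \<psi> I u1 \<le> phi I \<psi> i u2 - phi I \<psi> i u1"
    and "phi I \<psi> i u2 - phi I \<psi> i u1 \<le> u2 - u1"
proof -
  have d: "0 \<le> \<psi> j u2 - \<psi> j u1" if "j \<in> {1..I}" for j
    using inC_mono[OF inF_inC[OF F that] u] by simp
  have "(\<Sum>j=1..I. 2 * real (min i j) * (\<psi> j u2 - \<psi> j u1))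
      \<le> (\<Sum>j=1..I. 2 * real (min I j) * (\<psi> j u2 - \<psi> j u1))"
    using d i by (intro sum_mono mult_right_mono) auto
  then show "phi I \<psi> I u2 - phi I \<psi> I u1 \<le> phi I \<psi> i u2 - phi I \<psi> i u1"
    unfolding phi_diff by simp
  have "0 \<le> (\<Sum>j=1..I. 2 * real (min i j) * (\<psi> j u2 - \<psi> j u1))"
    using d by (intro sum_nonneg) auto
  then show "phi I \<psi> i u2 - phi I \<psi> i u1 \<le> u2 - u1"
    unfolding phi_diff by simp
qed

lemma phi_strict_mono:
  assumes F: "inF I \<psi>" and i: "i \<le> I"
  shows "strict_mono_on {0..} (phi I \<psi> i)"
proof (rule strict_mono_onI)
  fix u1 u2 :: real assume u: "u1 \<in> {0..}" "u2 \<in> {0..}" "u1 < u2"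
  have "strict_mono_on {0..} (phi I \<psi> I)"
    using F by (simp add: inF_def inCup_def)
  then have "phi I \<psi> I u1 < phi I \<psi> I u2"
    using u by (rule strict_mono_onD)
  then show "phi I \<psi> i u1 < phi I \<psi> i u2"
    using phi_increment_bounds(1)[OF F i, of u1 u2] u by simp
qed

lemma phi_nonneg: "inF I \<psi> \<Longrightarrow> i \<le> I \<Longrightarrow> 0 \<le> u \<Longrightarrow> 0 \<le> phi I \<psi> i u"
  using strict_mono_on_leD[OF phi_strict_mono, of I \<psi> i 0 u] by (simp add: phi_zero)

lemma phi_surj:
  assumes F: "inF I \<psi>" and i: "i \<le> I"
  shows "phi I \<psi> i ` {0..} = {0..}"
proof
  show "phi I \<psi> i ` {0..} \<subseteq> {0..}" using phi_nonneg[OF F i] by auto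
  show "{0..} \<subseteq> phi I \<psi> i ` {0..}"
  proof
    fix y :: real assume "y \<in> {0..}"
    have "filterlim (phi I \<psi> I) at_top at_top" using F by (simp add: inF_def inCup_def)
    then obtain N where N: "\<And>n. N \<le> n \<Longrightarrow> y \<le> phi I \<psi> I n"
      unfolding filterlim_at_top eventually_at_top_linorder by blast
    define b where "b = max N 0"
    have b: "0 \<le> b" "y \<le> phi I \<psi> I b" using N by (simp_all add: b_def)
    have "continuous_on {0..} (phi I \<psi> i)"
      unfolding phi_def using F by (intro continuous_intros) (auto dest: inF_inC simp: inC_def)
    then have "continuous_on {0..b} (phi I \<psi> i)"
      by (rule continuous_on_subset) auto
    moreover have "phi I \<psi> I b \<le> phi I \<psi> i b"
      using phi_increment_bounds(1)[OF F i order_refl b(1)] by (simp add: phi_zero[OF F])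
    ultimately obtain x where "0 \<le> x" "x \<le> b" "phi I \<psi> i x = y"
      using IVT'[of "phi I \<psi> i" 0 y b] b \<open>y \<in> {0..}\<close> by (auto simp: phi_zero[OF F])
    then show "y \<in> phi I \<psi> i ` {0..}" by force
  qed
qed

lemma bij_betw_phi: "inF I \<psi> \<Longrightarrow> i \<le> I \<Longrightarrow> bij_betw (phi I \<psi> i) {0..} {0..}"
  by (simp add: bij_betw_def phi_surj strict_mono_on_imp_inj_on phi_strict_mono)

lemma Upsilon_phi:
  assumes "inF I \<psi>" "i \<le> I" "0 \<le> u"
  shows "Upsilon I \<psi> i (phi I \<psi> i u) = \<psi> i u"
  using the_inv_into_f_f[OF bij_betw_imp_inj_on[OF bij_betw_phi[OF assms(1,2)]]] assms(3)
  by (simp add: Upsilon_def)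

lemma Upsilon_eq:
  assumes "inF I \<psi>" "i \<le> I" "0 \<le> z"
  obtains u where "0 \<le> u" "phi I \<psi> i u = z" "Upsilon I \<psi> i z = \<psi> i u"
proof -
  have "z \<in> phi I \<psi> i ` {0..}" using phi_surj[OF assms(1,2)] assms(3) by simp
  then obtain u where "0 \<le> u" "phi I \<psi> i u = z" by auto
  with Upsilon_phi[OF assms(1,2)] that show ?thesis by blast
qed

lemma Upsilon_nonneg:
  assumes F: "inF I \<psi>" and i: "i \<in> {1..I}" and z: "0 \<le> z"
  shows "0 \<le> Upsilon I \<psi> i z"
proof -
  obtain u where "0 \<le> u" "Upsilon I \<psi> i z = \<psi> i u"
    using Upsilon_eq[OF F _ z, of i] i by auto
  with inF_inC[OF F i] show ?thesis by (simp add: inC_def)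
qed

lemma inC_Upsilon:
  assumes F: "inF I \<psi>" and i: "i \<in> {1..I}" and cont: "continuous_on {0..} (Upsilon I \<psi> i)"
  shows "inC (Upsilon I \<psi> i)"
proof -
  have iI: "i \<le> I" using i by simp
  have "mono_on {0..} (Upsilon I \<psi> i)"
  proof (rule mono_onI)
    fix z1 z2 :: real assume z: "z1 \<in> {0..}" "z2 \<in> {0..}" "z1 \<le> z2"
    obtain u1 u2 where u: "0 \<le> u1" "0 \<le> u2" "phi I \<psi> i u1 = z1" "phi I \<psi> i u2 = z2"
      and "Upsilon I \<psi> i z1 = \<psi> i u1" "Upsilon I \<psi> i z2 = \<psi> i u2"
      using Upsilon_eq[OF F iI, of z1] Upsilon_eq[OF F iI, of z2] z by (metis atLeast_iff)
    moreover have "u1 \<le> u2"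
      using strict_mono_on_less_eq[OF phi_strict_mono[OF F iI], of u1 u2] u z(3) by simp
    ultimately show "Upsilon I \<psi> i z1 \<le> Upsilon I \<psi> i z2"
      using inC_mono[OF inF_inC[OF F i]] by simp
  qed
  moreover have "Upsilon I \<psi> i 0 = 0"
    using Upsilon_phi[OF F iI, of 0] inF_inC[OF F i] by (simp add: phi_zero[OF F] inC_def)
  ultimately show ?thesis
    unfolding inC_def using cont Upsilon_nonneg[OF F i] by blast
qed

section \<open>The Lipschitz condition\<close>

definition slope_sup :: "(real \<Rightarrow> real) \<Rightarrow> (real \<Rightarrow> real) \<Rightarrow> ereal" where
  "slope_sup f g = (SUP p\<in>{(a, b). a \<ge> 0 \<and> b \<ge> 0 \<and> a \<noteq> b}.
     ereal ((f (fst p) - f (snd p)) / (g (fst p) - g (snd p))))"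

lemma inD_iff:
  "inD I \<psi> \<longleftrightarrow> inF I \<psi> \<and> (\<Sum>i=1..I. ereal (real i) * slope_sup (\<psi> i) (phi I \<psi> i)) < 1/2"
  by (simp add: inD_def slope_sup_def)

lemma inDbar_iff:
  "inDbar I \<psi>b \<longleftrightarrow> (\<forall>i\<in>{1..I}. inC (\<psi>b i)) \<and> (\<Sum>i=1..I. ereal (real i) * slope_sup (\<psi>b i) id) < 1/2"
  by (simp add: inDbar_def slope_sup_def)

lemma slope_sup_reparametrize:
  assumes "bij_betw g {0..} {0..}"
  shows "slope_sup (f \<circ> the_inv_into {0..} g) id = slope_sup f g"
proof -
  let ?P = "{(a, b). a \<ge> 0 \<and> b \<ge> 0 \<and> a \<noteq> (b::real)}"
  let ?G = "\<lambda>p. (g (fst p), g (snd p))"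
  have inj: "inj_on g {0..}" and onto: "g ` {0..} = {0..}"
    using assms by (auto simp: bij_betw_def)
  have "?G ` ?P = ?P"
  proof
    show "?G ` ?P \<subseteq> ?P" using inj onto by (auto simp: inj_on_def)
    show "?P \<subseteq> ?G ` ?P"
    proof (clarify)
      fix a b :: real assume ab: "0 \<le> a" "0 \<le> b" "a \<noteq> b"
      then obtain a' b' where "0 \<le> a'" "0 \<le> b'" "g a' = a" "g b' = b"
        using onto by (metis atLeast_iff imageE)
      with ab show "(a, b) \<in> ?G ` ?P" by (intro image_eqI[of _ _ "(a', b')"]) auto
    qed
  qed
  define R where "R p = ereal ((f (the_inv_into {0..} g (fst p)) - f (the_inv_into {0..} g (snd p)))
    / (fst p - snd p))" for p
  have "slope_sup (f \<circ> the_inv_into {0..} g) id = Sup (R ` ?P)"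
    by (simp add: slope_sup_def R_def)
  also have "\<dots> = Sup (R ` ?G ` ?P)"
    using \<open>?G ` ?P = ?P\<close> by simp
  also have "\<dots> = slope_sup f g"
    unfolding slope_sup_def image_image by (rule SUP_cong) (auto simp: R_def the_inv_into_f_f[OF inj])
  finally show ?thesis .
qed

lemma slope_sup_Upsilon:
  "inF I \<psi> \<Longrightarrow> i \<le> I \<Longrightarrow> slope_sup (Upsilon I \<psi> i) id = slope_sup (\<psi> i) (phi I \<psi> i)"
  unfolding Upsilon_def by (rule slope_sup_reparametrize[OF bij_betw_phi])

lemma slope_sup_bound:
  assumes "slope_sup f g = ereal L" and "0 \<le> u1" "u1 < u2" and "g u1 < g u2"
  shows "f u2 - f u1 \<le> L * (g u2 - g u1)"
proof -
  have "ereal ((f u2 - f u1) / (g u2 - g u1)) \<le> slope_sup f g"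
    unfolding slope_sup_def using assms(2,3) by (intro SUP_upper2[of "(u2, u1)"]) auto
  with assms(1,4) show ?thesis by (simp add: pos_divide_le_eq mult.commute)
qed

lemma slope_sup_nonneg:
  assumes "f 0 \<le> f 1" and "g 0 < g 1"
  shows "0 \<le> slope_sup f g"
  unfolding slope_sup_def using assms
  by (intro SUP_upper2[of "(1, 0)"]) (auto intro: divide_nonneg_pos)

lemma ereal_weighted_sum_less:
  fixes S :: "'a \<Rightarrow> ereal"
  assumes "finite J" and "\<And>i. i \<in> J \<Longrightarrow> 0 \<le> S i" and "\<And>i. i \<in> J \<Longrightarrow> 0 < w i"
    and "(\<Sum>i\<in>J. ereal (w i) * S i) < ereal r"
  shows "\<forall>i\<in>J. S i = ereal (real_of_ereal (S i))" and "(\<Sum>i\<in>J. w i * real_of_ereal (S i)) < r"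
proof -
  have fin: "S i \<noteq> \<infinity>" if i: "i \<in> J" for i
  proof
    assume "S i = \<infinity>"
    have "(\<Sum>i\<in>J. ereal (w i) * S i) = ereal (w i) * S i + (\<Sum>j\<in>J - {i}. ereal (w j) * S j)"
      by (rule sum.remove[OF assms(1) i])
    moreover have "0 \<le> (\<Sum>j\<in>J - {i}. ereal (w j) * S j)"
      using assms(2,3) by (intro sum_nonneg) (auto simp: ereal_zero_le_0_iff less_imp_le)
    moreover have "ereal (w i) * S i = \<infinity>" using \<open>S i = \<infinity>\<close> assms(3)[OF i] by simp
    ultimately show False using assms(4) by simp
  qed
  show real: "\<forall>i\<in>J. S i = ereal (real_of_ereal (S i))"
  proof
    fix i assume "i \<in> J"
    with fin assms(2) show "S i = ereal (real_of_ereal (S i))" by (cases "S i") auto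
  qed
  have "(\<Sum>i\<in>J. ereal (w i) * S i) = (\<Sum>i\<in>J. ereal (w i * real_of_ereal (S i)))"
  proof (rule sum.cong[OF refl])
    fix x assume "x \<in> J"
    then obtain r where "S x = ereal r" using real by blast
    then show "ereal (w x) * S x = ereal (w x * real_of_ereal (S x))" by simp
  qed
  then have "(\<Sum>i\<in>J. ereal (w i) * S i) = ereal (\<Sum>i\<in>J. w i * real_of_ereal (S i))"
    by simp
  with assms(4) show "(\<Sum>i\<in>J. w i * real_of_ereal (S i)) < r" by simp
qed

lemma phi_expanding_of_Lipschitz:
  assumes F: "inF I \<psi>" and i: "i \<le> I" and u: "0 \<le> u1" "u1 \<le> u2"
    and Lipschitz: "\<And>j. j \<in> {1..I} \<Longrightarrow> \<psi> j u2 - \<psi> j u1 \<le> L j * (u2 - u1)"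
  shows "(1 - 2 * (\<Sum>j=1..I. real j * L j)) * (u2 - u1) \<le> phi I \<psi> i u2 - phi I \<psi> i u1"
proof -
  have "2 * real (min i j) * (\<psi> j u2 - \<psi> j u1) \<le> 2 * (real j * L j) * (u2 - u1)" if j: "j \<in> {1..I}" for j
  proof -
    have "2 * real (min i j) * (\<psi> j u2 - \<psi> j u1) \<le> 2 * real j * (\<psi> j u2 - \<psi> j u1)"
      using inC_mono[OF inF_inC[OF F j] u] by (intro mult_right_mono) auto
    also have "\<dots> \<le> 2 * real j * (L j * (u2 - u1))"
      using Lipschitz[OF j] by (intro mult_left_mono) auto
    finally show ?thesis by (simp add: algebra_simps)
  qed
  then have "(\<Sum>j=1..I. 2 * real (min i j) * (\<psi> j u2 - \<psi> j u1)) \<le> (\<Sum>j=1..I. 2 * (real j * L j) * (u2 - u1))"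
    by (rule sum_mono)
  also have "\<dots> = 2 * (\<Sum>j=1..I. real j * L j) * (u2 - u1)"
    by (simp add: sum_distrib_left sum_distrib_right algebra_simps)
  finally show ?thesis
    unfolding phi_diff by (simp add: algebra_simps)
qed

lemma inD_expanding:
  assumes D: "inD I \<psi>"
  obtains c :: real where "0 < c"
    and "\<And>i u1 u2. i \<in> {1..I} \<Longrightarrow> 0 \<le> u1 \<Longrightarrow> u1 \<le> u2 \<Longrightarrow>
      c * (u2 - u1) \<le> phi I \<psi> i u2 - phi I \<psi> i u1"
proof -
  let ?S = "\<lambda>j. slope_sup (\<psi> j) (phi I \<psi> j)"
  have F: "inF I \<psi>" using D by (simp add: inD_iff)
  have nonneg: "0 \<le> ?S j" if "j \<in> {1..I}" for j
    using that inC_mono[OF inF_inC[OF F that], of 0 1] strict_mono_onD[OF phi_strict_mono[OF F], of j 0 1]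
    by (intro slope_sup_nonneg) auto
  have "(1/2::ereal) = ereal (1/2)"
    by (simp only: one_ereal_def numeral_eq_ereal ereal_divide) simp
  then have "(\<Sum>j=1..I. ereal (real j) * ?S j) < ereal (1/2)"
    using D by (simp add: inD_iff)
  from ereal_weighted_sum_less[OF _ nonneg _ this]
  have S: "\<And>j. j \<in> {1..I} \<Longrightarrow> ?S j = ereal (real_of_ereal (?S j))"
    and small: "(\<Sum>j=1..I. real j * real_of_ereal (?S j)) < 1/2" by auto
  define c where "c = 1 - 2 * (\<Sum>j=1..I. real j * real_of_ereal (?S j))"
  show thesis
  proof (rule that)
    show "0 < c" using small by (simp add: c_def)
    fix i and u1 u2 :: real assume i: "i \<in> {1..I}" and u: "0 \<le> u1" "u1 \<le> u2"
    show "c * (u2 - u1) \<le> phi I \<psi> i u2 - phi I \<psi> i u1"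
      unfolding c_def
    proof (rule phi_expanding_of_Lipschitz[OF F _ u])
      fix j assume j: "j \<in> {1..I}"
      show "\<psi> j u2 - \<psi> j u1 \<le> real_of_ereal (?S j) * (u2 - u1)"
      proof (cases "u1 = u2")
        case False
        then have "phi I \<psi> j u1 < phi I \<psi> j u2"
          using j u strict_mono_onD[OF phi_strict_mono[OF F], of j u1 u2] by auto
        then have "\<psi> j u2 - \<psi> j u1 \<le> real_of_ereal (?S j) * (phi I \<psi> j u2 - phi I \<psi> j u1)"
          using slope_sup_bound[OF S[OF j]] u False by simp
        also have "\<dots> \<le> real_of_ereal (?S j) * (u2 - u1)"
          using phi_increment_bounds(2)[OF F _ u, of j] j nonneg[OF j] S[OF j]
          by (intro mult_left_mono) (auto simp: real_of_ereal_pos)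
        finally show ?thesis .
      qed simp
    qed (use i in simp)
  qed
qed

section \<open>Functions of one variable\<close>

lemma phi_zext:
  assumes "inF I \<psi>"
  shows "phi I (\<lambda>j. zext (\<psi> j)) i x = min x 0 + phi I \<psi> i (max x 0)"
proof (cases "x < 0")
  case True
  then show ?thesis using phi_zero[OF assms, of i] by (simp add: phi_def zext_def)
next
  case False
  then show ?thesis by (simp add: phi_def zext_def)
qed

lemma phi_zext_surj:
  assumes F: "inF I \<psi>" and i: "i \<le> I"
  shows "range (phi I (\<lambda>j. zext (\<psi> j)) i) = UNIV"
proof -
  have "y \<in> range (phi I (\<lambda>j. zext (\<psi> j)) i)" for y
  proof (cases "y < 0")
    case True
    then show ?thesis using phi_zext[OF F, of i y] phi_zero[OF F, of i] by (intro range_eqI[where x = y]) simp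
  next
    case False
    then have "y \<in> phi I \<psi> i ` {0..}" using phi_surj[OF F i] by simp
    then obtain u where "0 \<le> u" "phi I \<psi> i u = y" by auto
    then show ?thesis using phi_zext[OF F, of i u] by (intro range_eqI[where x = u]) simp
  qed
  then show ?thesis by blast
qed

lemma phi_zext_increment:
  assumes "inF I \<psi>"
  shows "phi I (\<lambda>j. zext (\<psi> j)) i y - phi I (\<lambda>j. zext (\<psi> j)) i x
    = (min y 0 - min x 0) + (phi I \<psi> i (max y 0) - phi I \<psi> i (max x 0))"
  by (simp add: phi_zext[OF assms])

lemma phi_zext_strict_mono:
  assumes F: "inF I \<psi>" and i: "i \<le> I"
  shows "strict_mono_on UNIV (phi I (\<lambda>j. zext (\<psi> j)) i)"
proof (rule strict_mono_onI)
  fix x y :: real assume "x < y"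
  then have "max x 0 < max y 0 \<or> min x 0 < min y 0" by linarith
  moreover have "phi I \<psi> i (max x 0) \<le> phi I \<psi> i (max y 0)"
    using strict_mono_on_leD[OF phi_strict_mono[OF F i]] \<open>x < y\<close> by simp
  moreover have "phi I \<psi> i (max x 0) < phi I \<psi> i (max y 0)" if "max x 0 < max y 0"
    using strict_mono_onD[OF phi_strict_mono[OF F i]] that by simp
  ultimately show "phi I (\<lambda>j. zext (\<psi> j)) i x < phi I (\<lambda>j. zext (\<psi> j)) i y"
    using phi_zext_increment[OF F, of i y x] \<open>x < y\<close> by linarith
qed

lemma phi_zext_contracting:
  assumes F: "inF I \<psi>" and i: "i \<le> I" and "x \<le> y"
  shows "phi I (\<lambda>j. zext (\<psi> j)) i y - phi I (\<lambda>j. zext (\<psi> j)) i x \<le> y - x"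
  using phi_increment_bounds(2)[OF F i, of "max x 0" "max y 0"] phi_zext_increment[OF F, of i y x] \<open>x \<le> y\<close>
  by linarith

lemma phi_zext_expanding:
  assumes F: "inF I \<psi>" and "c \<le> 1" and "x \<le> y"
    and expanding: "\<And>u1 u2. 0 \<le> u1 \<Longrightarrow> u1 \<le> u2 \<Longrightarrow> c * (u2 - u1) \<le> phi I \<psi> i u2 - phi I \<psi> i u1"
  shows "c * (y - x) \<le> phi I (\<lambda>j. zext (\<psi> j)) i y - phi I (\<lambda>j. zext (\<psi> j)) i x"
proof -
  have "c * (min y 0 - min x 0) \<le> 1 * (min y 0 - min x 0)"
    using \<open>c \<le> 1\<close> \<open>x \<le> y\<close> by (intro mult_right_mono) auto
  moreover have "c * (max y 0 - max x 0) \<le> phi I \<psi> i (max y 0) - phi I \<psi> i (max x 0)"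
    using expanding \<open>x \<le> y\<close> by simp
  moreover have "y - x = (min y 0 - min x 0) + (max y 0 - max x 0)" by linarith
  ultimately show ?thesis
    unfolding phi_zext_increment[OF F] by (simp add: distrib_left)
qed

lemma Upsilon_phi_zext:
  assumes F: "inF I \<psi>" and j: "j \<le> I"
  shows "zext (Upsilon I \<psi> j) (phi I (\<lambda>j. zext (\<psi> j)) j x) = zext (\<psi> j) x"
proof (cases "x < 0")
  case True
  then show ?thesis using phi_zext[OF F, of j x] phi_zero[OF F, of j] by (simp add: zext_def)
next
  case False
  then have "phi I (\<lambda>j. zext (\<psi> j)) j x = phi I \<psi> j x" "0 \<le> phi I \<psi> j x"
    using phi_zext[OF F, of j x] phi_nonneg[OF F j, of x] by simp_all
  then show ?thesis using Upsilon_phi[OF F j] False by (simp add: zext_def)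
qed

lemma Ck_zext_Upsilon:
  assumes F: "inF I \<psi>" and i: "i \<in> {1..I}" and "0 < c"
    and expanding: "\<And>u1 u2. 0 \<le> u1 \<Longrightarrow> u1 \<le> u2 \<Longrightarrow> c * (u2 - u1) \<le> phi I \<psi> i u2 - phi I \<psi> i u1"
    and Ck_\<psi>: "\<And>j. j \<in> {1..I} \<Longrightarrow> Ck (Suc q) (zext (\<psi> j))"
  shows "Ck (Suc q) (zext (Upsilon I \<psi> i))"
proof -
  let ?h = "\<lambda>p. phi I (\<lambda>j. zext (\<psi> j)) i (fst p)"
  have iI: "i \<le> I" using i by simp
  have "c \<le> 1"
    using expanding[of 0 1] phi_increment_bounds(2)[OF F iI, of 0 1] by simp
  interpret param_expanding UNIV "{0}" ?h
  proof
    show "(\<lambda>u. ?h (u, t)) ` UNIV = UNIV" for t :: real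
      using phi_zext_surj[OF F iI] by simp
    show "\<exists>c>0. \<forall>u1\<in>UNIV. \<forall>u2\<in>UNIV. u1 \<le> u2 \<longrightarrow> c * (u2 - u1) \<le> ?h (u2, t) - ?h (u1, t)" for t :: real
      using phi_zext_expanding[OF F \<open>c \<le> 1\<close> _ expanding] \<open>0 < c\<close> by auto
  qed simp
  have h: "Ck2 (Suc q) (UNIV \<times> {0}) ?h"
    unfolding phi_def by (intro Ck2_diff Ck2_fst Ck2_sum Ck2_cmult Ck_imp_Ck2_fst Ck_\<psi>) auto
  have "Ck2 (Suc q) (UNIV \<times> {0}) (\<lambda>p. zext (\<psi> i) (fst (param_inv p, snd p)))"
    by (rule Ck2_compose[OF Ck_imp_Ck2_fst[OF Ck_\<psi>[OF i], where S = UNIV] Ck2_param_inv[OF h] Ck2_snd]) simp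
  from Ck2_imp_Ck_line[OF this]
  have "Ck (Suc q) (\<lambda>x. zext (\<psi> i) (param_inv (x, 0)))" by simp
  moreover have "zext (\<psi> i) (param_inv (x, 0)) = zext (Upsilon I \<psi> i) x" for x
  proof -
    have "x \<in> range (phi I (\<lambda>j. zext (\<psi> j)) i)" using phi_zext_surj[OF F iI] by simp
    then obtain u where "x = phi I (\<lambda>j. zext (\<psi> j)) i u" by blast
    moreover have "param_inv (phi I (\<lambda>j. zext (\<psi> j)) i u, 0) = u"
      using param_inv_h[of u 0] by simp
    ultimately show ?thesis using Upsilon_phi_zext[OF F iI, of u] by simp
  qed
  ultimately show ?thesis by simp
qed

lemma Ck_zext_of_Upsilon:
  assumes F: "inF I \<psi>" and i: "i \<in> {1..I}"
    and Ck_\<Upsilon>: "\<And>j. j \<in> {1..I} \<Longrightarrow> Ck (Suc q) (zext (Upsilon I \<psi> j))"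
  shows "Ck (Suc q) (zext (\<psi> i))"
proof -
  let ?\<phi> = "\<lambda>k p. phi I (\<lambda>j. zext (\<psi> j)) k (fst p)"
  have \<phi>: "Ck2 (Suc q) (UNIV \<times> {0}) (?\<phi> i)"
  proof (rule Ck2_recover[where g = "\<lambda>j p. zext (Upsilon I \<psi> j) (fst p)"])
    show "?\<phi> k p = ?\<phi> (Suc k) p + 2 * (\<Sum>j=Suc k..I. zext (Upsilon I \<psi> j) (fst (?\<phi> j p, snd p)))"
      if "k < I" for k p
      using phi_Suc[OF that] Upsilon_phi_zext[OF F] by simp
    show "(\<lambda>u. ?\<phi> I (u, t)) ` UNIV = UNIV" for t
      using phi_zext_surj[OF F order_refl] by simp
    show "strict_mono_on UNIV (\<lambda>u. ?\<phi> I (u, t))" for t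
      using phi_zext_strict_mono[OF F order_refl] by (simp add: strict_mono_on_def)
  qed (use i Ck_\<Upsilon> phi_zext_contracting[OF F order_refl] in \<open>auto intro: Ck_imp_Ck2_fst simp: phi_0\<close>)
  have "Ck2 (Suc q) (UNIV \<times> {0}) (\<lambda>p. zext (Upsilon I \<psi> i) (fst (?\<phi> i p, snd p)))"
    by (rule Ck2_compose[OF Ck_imp_Ck2_fst[OF Ck_\<Upsilon>[OF i], where S = UNIV] \<phi> Ck2_snd]) simp
  then have "Ck2 (Suc q) (UNIV \<times> {0}) (\<lambda>p. zext (\<psi> i) (fst p))"
    using Upsilon_phi_zext[OF F, of i] i by simp
  from Ck2_imp_Ck_line[OF this] show ?thesis by simp
qed

lemma inDq_iff_inDbarq:
  assumes F: "inF I \<psi>"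
  shows "inDq (Suc q) I \<psi> \<longleftrightarrow> inDbarq (Suc q) I (Upsilon I \<psi>)"
proof -
  have slopes: "(\<Sum>i=1..I. ereal (real i) * slope_sup (Upsilon I \<psi> i) id)
      = (\<Sum>i=1..I. ereal (real i) * slope_sup (\<psi> i) (phi I \<psi> i))"
    using slope_sup_Upsilon[OF F] by (intro sum.cong) auto
  show ?thesis
  proof
    assume D: "inDq (Suc q) I \<psi>"
    then obtain c where "0 < c" and expanding: "\<And>i u1 u2. i \<in> {1..I} \<Longrightarrow> 0 \<le> u1 \<Longrightarrow> u1 \<le> u2 \<Longrightarrow>
        c * (u2 - u1) \<le> phi I \<psi> i u2 - phi I \<psi> i u1"
      using inD_expanding unfolding inDq_def by blast
    have Ck: "Ck (Suc q) (zext (Upsilon I \<psi> i))" if "i \<in> {1..I}" for i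
      by (rule Ck_zext_Upsilon[OF F that \<open>0 < c\<close> expanding[OF that]])
        (use D in \<open>auto simp: inDq_def inCq_def simp del: Ck.simps\<close>)
    then have "inC (Upsilon I \<psi> i)" if "i \<in> {1..I}" for i
      using inC_Upsilon[OF F that] Ck_imp_continuous_on continuous_on_of_zext that by blast
    with Ck D slopes show "inDbarq (Suc q) I (Upsilon I \<psi>)"
      by (simp add: inDbarq_def inDbar_iff inDq_def inD_iff inCq_def del: Ck.simps)
  next
    assume Dbar: "inDbarq (Suc q) I (Upsilon I \<psi>)"
    then have "Ck (Suc q) (zext (\<psi> i))" if "i \<in> {1..I}" for i
      using Ck_zext_of_Upsilon[OF F that] by (simp add: inDbarq_def inCq_def del: Ck.simps)
    with F Dbar slopes show "inDq (Suc q) I \<psi>"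
      by (simp add: inDbarq_def inDbar_iff inDq_def inD_iff inCq_def inF_inC del: Ck.simps)
  qed
qed

section \<open>Functions of two variables\<close>

lemma Ck2_Upsilon:
  fixes \<psi> :: "nat \<Rightarrow> real \<Rightarrow> real \<Rightarrow> real"
  assumes F: "\<And>t. 0 \<le> t \<Longrightarrow> inF I (\<lambda>j u. \<psi> j u t)"
    and expanding: "\<And>t. 0 \<le> t \<Longrightarrow> \<exists>c>0. \<forall>u1 u2. 0 \<le> u1 \<longrightarrow> u1 \<le> u2 \<longrightarrow>
      c * (u2 - u1) \<le> phi I (\<lambda>j u. \<psi> j u t) i u2 - phi I (\<lambda>j u. \<psi> j u t) i u1"
    and Ck2_\<psi>: "\<And>j. j \<in> {1..I} \<Longrightarrow> Ck2 (Suc q) ({0..} \<times> {0..}) (\<lambda>(u, t). \<psi> j u t)"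
    and i: "i \<in> {1..I}"
  shows "Ck2 (Suc q) ({0..} \<times> {0..}) (\<lambda>(z, t). Upsilon I (\<lambda>j u. \<psi> j u t) i z)"
proof -
  let ?h = "\<lambda>p. phi I (\<lambda>j u. \<psi> j u (snd p)) i (fst p)"
  interpret param_expanding "{0..}" "{0..}" ?h
  proof
    show "(\<lambda>u. ?h (u, t)) ` {0..} = {0..}" if "t \<in> {0..}" for t
      using phi_surj[OF F] i that by simp
    show "\<exists>c>0. \<forall>u1\<in>{0..}. \<forall>u2\<in>{0..}. u1 \<le> u2 \<longrightarrow> c * (u2 - u1) \<le> ?h (u2, t) - ?h (u1, t)"
      if t: "t \<in> {0..}" for t
    proof -
      obtain c where "c > 0" and "\<forall>u1 u2. 0 \<le> u1 \<longrightarrow> u1 \<le> u2 \<longrightarrow>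
          c * (u2 - u1) \<le> phi I (\<lambda>j u. \<psi> j u t) i u2 - phi I (\<lambda>j u. \<psi> j u t) i u1"
        using expanding[of t] t by auto
      then show ?thesis by (intro exI[of _ c]) auto
    qed
  qed simp
  have h: "Ck2 (Suc q) ({0..} \<times> {0..}) ?h"
    unfolding phi_def using Ck2_\<psi> by (intro Ck2_diff Ck2_fst Ck2_sum Ck2_cmult) (auto simp: case_prod_beta')
  have "Ck2 (Suc q) ({0..} \<times> {0..}) (\<lambda>p. (\<lambda>(u, t). \<psi> i u t) (param_inv p, snd p))"
    by (rule Ck2_compose[OF Ck2_\<psi>[OF i] Ck2_param_inv[OF h] Ck2_snd param_inv_snd_mem])
  then show ?thesis
    by (rule Ck2_cong) (auto simp: param_inv_def Upsilon_def)
qed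

lemma Ck2_of_Upsilon:
  fixes \<psi> :: "nat \<Rightarrow> real \<Rightarrow> real \<Rightarrow> real"
  assumes F: "\<And>t. 0 \<le> t \<Longrightarrow> inF I (\<lambda>j u. \<psi> j u t)"
    and Ck2_\<Upsilon>: "\<And>j. j \<in> {1..I} \<Longrightarrow> Ck2 (Suc q) ({0..} \<times> {0..}) (\<lambda>(z, t). Upsilon I (\<lambda>j u. \<psi> j u t) j z)"
    and i: "i \<in> {1..I}"
  shows "Ck2 (Suc q) ({0..} \<times> {0..}) (\<lambda>(u, t). \<psi> i u t)"
proof -
  let ?\<phi> = "\<lambda>k p. phi I (\<lambda>j u. \<psi> j u (snd p)) k (fst p)"
  let ?g = "\<lambda>k p. Upsilon I (\<lambda>j u. \<psi> j u (snd p)) k (fst p)"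
  have \<Upsilon>_\<phi>: "Upsilon I (\<lambda>j u. \<psi> j u (snd p)) j (?\<phi> j p) = \<psi> j (fst p) (snd p)"
    if "p \<in> {0..} \<times> {0..}" "j \<le> I" for j p
    using Upsilon_phi[OF F that(2)] that(1) by (auto simp: mem_Times_iff)
  have \<phi>_mem: "?\<phi> k p \<in> {0..}" if "p \<in> {0..} \<times> {0..}" "k \<le> I" for p k
    using phi_nonneg[OF F that(2)] that(1) by (auto simp: mem_Times_iff)
  have \<phi>: "Ck2 (Suc q) ({0..} \<times> {0..}) (?\<phi> i)"
  proof (rule Ck2_recover[where g = ?g])
    show "?\<phi> k p = ?\<phi> (Suc k) p + 2 * (\<Sum>j=Suc k..I. ?g j (?\<phi> j p, snd p))"
      if "p \<in> {0..} \<times> {0..}" "k < I" for p k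
      using phi_Suc[OF that(2)] \<Upsilon>_\<phi>[OF that(1)] by simp
    show "(\<lambda>u. ?\<phi> I (u, t)) ` {0..} = {0..}" if "t \<in> {0..}" for t
      using phi_surj[OF F order_refl] that by simp
    show "strict_mono_on {0..} (\<lambda>u. ?\<phi> I (u, t))" if "t \<in> {0..}" for t
      using phi_strict_mono[OF F order_refl] that by simp
    show "?\<phi> I (u2, t) - ?\<phi> I (u1, t) \<le> u2 - u1"
      if "t \<in> {0..}" "u1 \<in> {0..}" "u2 \<in> {0..}" "u1 \<le> u2" for t u1 u2
      using phi_increment_bounds(2)[OF F order_refl] that by simp
  qed (use Ck2_\<Upsilon> i \<phi>_mem in \<open>auto simp: phi_0 case_prod_beta'\<close>)
  have "Ck2 (Suc q) ({0..} \<times> {0..}) (\<lambda>p. (\<lambda>(z, t). Upsilon I (\<lambda>j u. \<psi> j u t) i z) (?\<phi> i p, snd p))"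
    by (rule Ck2_compose[OF Ck2_\<Upsilon>[OF i] \<phi> Ck2_snd]) (use \<phi>_mem i in \<open>auto simp: mem_Times_iff\<close>)
  then show ?thesis
    by (rule Ck2_cong) (use \<Upsilon>_\<phi> i in auto)
qed

lemma inCq2_Upsilon:
  fixes \<psi> :: "nat \<Rightarrow> real \<Rightarrow> real \<Rightarrow> real"
  assumes D: "\<And>t. 0 \<le> t \<Longrightarrow> inD I (\<lambda>j u. \<psi> j u t)"
    and C: "\<And>j. j \<in> {1..I} \<Longrightarrow> inCq2 (Suc q) (\<psi> j)"
    and i: "i \<in> {1..I}"
  shows "inCq2 (Suc q) (\<lambda>z t. Upsilon I (\<lambda>j u. \<psi> j u t) i z)"
proof -
  have F: "inF I (\<lambda>j u. \<psi> j u t)" if "0 \<le> t" for t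
    using D[OF that] by (simp add: inD_iff)
  have expanding: "\<exists>c>0. \<forall>u1 u2. 0 \<le> u1 \<longrightarrow> u1 \<le> u2 \<longrightarrow>
      c * (u2 - u1) \<le> phi I (\<lambda>j u. \<psi> j u t) i u2 - phi I (\<lambda>j u. \<psi> j u t) i u1" if t: "0 \<le> t" for t
  proof -
    obtain c :: real where "0 < c" and "\<And>i u1 u2. i \<in> {1..I} \<Longrightarrow> 0 \<le> u1 \<Longrightarrow> u1 \<le> u2 \<Longrightarrow>
        c * (u2 - u1) \<le> phi I (\<lambda>j u. \<psi> j u t) i u2 - phi I (\<lambda>j u. \<psi> j u t) i u1"
      using inD_expanding[OF D[OF t]] by blast
    with i show ?thesis by blast
  qed
  have "Ck2 (Suc q) ({0..} \<times> {0..}) (\<lambda>(u, t). \<psi> j u t)" if "j \<in> {1..I}" for j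
    using C[OF that] by (simp add: inCq2_def)
  from Ck2_Upsilon[OF F expanding this i]
  have "Ck2 (Suc q) ({0..} \<times> {0..}) (\<lambda>(z, t). Upsilon I (\<lambda>j u. \<psi> j u t) i z)" .
  with Upsilon_nonneg[OF F i] show ?thesis
    by (simp add: inCq2_def)
qed

lemma inCq2_of_Upsilon:
  fixes \<psi> :: "nat \<Rightarrow> real \<Rightarrow> real \<Rightarrow> real"
  assumes F: "\<And>t. 0 \<le> t \<Longrightarrow> inF I (\<lambda>j u. \<psi> j u t)"
    and C: "\<And>j. j \<in> {1..I} \<Longrightarrow> inCq2 (Suc q) (\<lambda>z t. Upsilon I (\<lambda>j u. \<psi> j u t) j z)"
    and i: "i \<in> {1..I}"
  shows "inCq2 (Suc q) (\<psi> i)"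
proof -
  have "Ck2 (Suc q) ({0..} \<times> {0..}) (\<lambda>(z, t). Upsilon I (\<lambda>j u. \<psi> j u t) j z)" if "j \<in> {1..I}" for j
    using C[OF that] by (simp add: inCq2_def)
  from Ck2_of_Upsilon[OF F this i]
  have "Ck2 (Suc q) ({0..} \<times> {0..}) (\<lambda>(u, t). \<psi> i u t)" .
  moreover have "0 \<le> \<psi> i u t" if "0 \<le> u" "0 \<le> t" for u t
    using inF_inC[OF F[OF that(2)] i] that(1) by (simp add: inC_def)
  ultimately show ?thesis
    by (simp add: inCq2_def)
qed

theorem lemma6p4:
  fixes I q :: nat and \<psi> :: "nat \<Rightarrow> real \<Rightarrow> real \<Rightarrow> real"
  assumes "I \<ge> 1" and "q \<ge> 1"
    and "\<forall>t\<ge>0. inF I (\<lambda>i u. \<psi> i u t)"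
  shows "((\<forall>t\<ge>0. inDq q I (\<lambda>i u. \<psi> i u t)) \<and> (\<forall>i\<in>{1..I}. inCq2 q (\<psi> i)))
     \<longleftrightarrow> ((\<forall>t\<ge>0. inDbarq q I (\<lambda>i z. Upsilon I (\<lambda>j u. \<psi> j u t) i z))
          \<and> (\<forall>i\<in>{1..I}. inCq2 q (\<lambda>z t. Upsilon I (\<lambda>j u. \<psi> j u t) i z)))"
proof -
  obtain q' where q: "q = Suc q'" using \<open>q \<ge> 1\<close> by (cases q) auto
  have F: "inF I (\<lambda>i u. \<psi> i u t)" if "0 \<le> t" for t
    using assms(3) that by blast
  have D: "inDq q I (\<lambda>i u. \<psi> i u t) \<longleftrightarrow> inDbarq q I (\<lambda>i z. Upsilon I (\<lambda>j u. \<psi> j u t) i z)"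
    if "0 \<le> t" for t
    unfolding q by (rule inDq_iff_inDbarq[OF F[OF that]])
  show ?thesis
  proof
    assume L: "(\<forall>t\<ge>0. inDq q I (\<lambda>i u. \<psi> i u t)) \<and> (\<forall>i\<in>{1..I}. inCq2 q (\<psi> i))"
    have Dt: "inD I (\<lambda>i u. \<psi> i u t)" if "0 \<le> t" for t
      using L that by (simp add: inDq_def)
    have C: "inCq2 (Suc q') (\<psi> j)" if "j \<in> {1..I}" for j
      using L that q by blast
    have "inCq2 q (\<lambda>z t. Upsilon I (\<lambda>j u. \<psi> j u t) i z)" if "i \<in> {1..I}" for i
      unfolding q by (rule inCq2_Upsilon[OF Dt C that])
    moreover have "inDbarq q I (\<lambda>i z. Upsilon I (\<lambda>j u. \<psi> j u t) i z)" if "0 \<le> t" for t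
      using D[OF that, THEN iffD1] L that by blast
    ultimately show "(\<forall>t\<ge>0. inDbarq q I (\<lambda>i z. Upsilon I (\<lambda>j u. \<psi> j u t) i z))
        \<and> (\<forall>i\<in>{1..I}. inCq2 q (\<lambda>z t. Upsilon I (\<lambda>j u. \<psi> j u t) i z))"
      by blast
  next
    assume R: "(\<forall>t\<ge>0. inDbarq q I (\<lambda>i z. Upsilon I (\<lambda>j u. \<psi> j u t) i z))
        \<and> (\<forall>i\<in>{1..I}. inCq2 q (\<lambda>z t. Upsilon I (\<lambda>j u. \<psi> j u t) i z))"
    then have C: "inCq2 (Suc q') (\<lambda>z t. Upsilon I (\<lambda>j u. \<psi> j u t) j z)" if "j \<in> {1..I}" for j
      using that q by blast
    have "inCq2 q (\<psi> i)" if "i \<in> {1..I}" for i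
      unfolding q by (rule inCq2_of_Upsilon[OF F C that])
    moreover have "inDq q I (\<lambda>i u. \<psi> i u t)" if "0 \<le> t" for t
      using D[OF that, THEN iffD2] R that by blast
    ultimately show "(\<forall>t\<ge>0. inDq q I (\<lambda>i u. \<psi> i u t)) \<and> (\<forall>i\<in>{1..I}. inCq2 q (\<psi> i))"
      by blast
  qed
qed

end
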